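(* Let $\mathfrak S=(S,\xrightarrow{F},\le)$ be a complete WSTS and $s_0\in S$. Then $Clover_{\mathfrak S}(s_0)$ is finite, and $cl(Cover_{\mathfrak S}(s_0))=\downarrow Clover_{\mathfrak S}(s_0)$.
   Context: A complete WSTS is a functional transition system $(S,\xrightarrow{F},\le)$ ($F$ finite set of partial maps; $s\to f(s)$ when $s\in\operatorname{dom}f$) such that $(S,\le)$ is a well partial order (well-founded, no infinite antichain), a dcpo (every directed subset $D$ has a lub $\bigvee D$) which is continuous (for each $x$, $\{y\mid y\ll x\}$ is directed with lub $x$; $y\ll x$ iff every directed $D$ with $x\le\bigvee D$ has an element above $y$), and every $f\in F$ is partial continuous: its domain is Scott-open and $f(\bigvee D)=\bigvee f(D)$ for every directed $D\subseteq\operatorname{dom}f$. Scott-open: upward-closed $U$ such that every directed $D$ with $\bigvee D\in U$ meets $U$; $cl(A)$ is the smallest Scott-closed (complement of Scott-open) set containing $A$. $Cover_{\mathfrak S}(s_0)=\downarrow Post^*(\downarrow s_0)$ where $Post^*$ is the reachability (reflexive-transitive) closure; $\operatorname{Lub}(E)=\{\bigvee D\mid D\subseteq E\text{ directed}\}$; $Clover_{\mathfrak S}(s_0)=\operatorname{Max}\operatorname{Lub}(Cover_{\mathfrak S}(s_0))$, $\operatorname{Max}$ denoting the set of maximal elements. *)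

theory Defs
  imports Main
begin

text \<open>The state set S is the whole of the type 'a; the quasi-order is an explicit
relation le; transition functions are partial maps 'a \<Rightarrow> 'a option.\<close>

definition directed :: "('a \<Rightarrow> 'a \<Rightarrow> bool) \<Rightarrow> 'a set \<Rightarrow> bool" where
  "directed le D \<longleftrightarrow> D \<noteq> {} \<and> (\<forall>x\<in>D. \<forall>y\<in>D. \<exists>z\<in>D. le x z \<and> le y z)"

definition is_lub :: "('a \<Rightarrow> 'a \<Rightarrow> bool) \<Rightarrow> 'a set \<Rightarrow> 'a \<Rightarrow> bool" where
  "is_lub le D x \<longleftrightarrow> (\<forall>d\<in>D. le d x) \<and> (\<forall>u. (\<forall>d\<in>D. le d u) \<longrightarrow> le x u)"

definition lub :: "('a \<Rightarrow> 'a \<Rightarrow> bool) \<Rightarrow> 'a set \<Rightarrow> 'a" where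
  "lub le D = (THE x. is_lub le D x)"

definition partial_order_on_type :: "('a \<Rightarrow> 'a \<Rightarrow> bool) \<Rightarrow> bool" where
  "partial_order_on_type le \<longleftrightarrow> (\<forall>x. le x x) \<and> (\<forall>x y z. le x y \<longrightarrow> le y z \<longrightarrow> le x z)
     \<and> (\<forall>x y. le x y \<longrightarrow> le y x \<longrightarrow> x = y)"

definition antichain :: "('a \<Rightarrow> 'a \<Rightarrow> bool) \<Rightarrow> 'a set \<Rightarrow> bool" where
  "antichain le A \<longleftrightarrow> (\<forall>x\<in>A. \<forall>y\<in>A. x \<noteq> y \<longrightarrow> \<not> le x y)"

definition wpo :: "('a \<Rightarrow> 'a \<Rightarrow> bool) \<Rightarrow> bool" where
  "wpo le \<longleftrightarrow> partial_order_on_type le \<and> wfP (\<lambda>x y. le x y \<and> x \<noteq> y)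
     \<and> (\<forall>A. antichain le A \<longrightarrow> finite A)"

definition dcpo :: "('a \<Rightarrow> 'a \<Rightarrow> bool) \<Rightarrow> bool" where
  "dcpo le \<longleftrightarrow> (\<forall>D. directed le D \<longrightarrow> (\<exists>x. is_lub le D x))"

definition way_below :: "('a \<Rightarrow> 'a \<Rightarrow> bool) \<Rightarrow> 'a \<Rightarrow> 'a \<Rightarrow> bool" where
  "way_below le y x \<longleftrightarrow> (\<forall>D. directed le D \<longrightarrow> le x (lub le D) \<longrightarrow> (\<exists>d\<in>D. le y d))"

definition continuous_dcpo :: "('a \<Rightarrow> 'a \<Rightarrow> bool) \<Rightarrow> bool" where
  "continuous_dcpo le \<longleftrightarrow> (\<forall>x. directed le {y. way_below le y x} \<and> lub le {y. way_below le y x} = x)"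

definition scott_open :: "('a \<Rightarrow> 'a \<Rightarrow> bool) \<Rightarrow> 'a set \<Rightarrow> bool" where
  "scott_open le U \<longleftrightarrow> (\<forall>x y. x \<in> U \<longrightarrow> le x y \<longrightarrow> y \<in> U)
     \<and> (\<forall>D. directed le D \<longrightarrow> lub le D \<in> U \<longrightarrow> D \<inter> U \<noteq> {})"

definition scott_closed :: "('a \<Rightarrow> 'a \<Rightarrow> bool) \<Rightarrow> 'a set \<Rightarrow> bool" where
  "scott_closed le C \<longleftrightarrow> scott_open le (- C)"

definition scott_cl :: "('a \<Rightarrow> 'a \<Rightarrow> bool) \<Rightarrow> 'a set \<Rightarrow> 'a set" where
  "scott_cl le A = \<Inter> {C. scott_closed le C \<and> A \<subseteq> C}"

definition pdom :: "('a \<Rightarrow> 'a option) \<Rightarrow> 'a set" where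
  "pdom f = {s. f s \<noteq> None}"

definition partial_continuous :: "('a \<Rightarrow> 'a \<Rightarrow> bool) \<Rightarrow> ('a \<Rightarrow> 'a option) \<Rightarrow> bool" where
  "partial_continuous le f \<longleftrightarrow> scott_open le (pdom f)
     \<and> (\<forall>D. directed le D \<longrightarrow> D \<subseteq> pdom f \<longrightarrow>
            is_lub le ((\<lambda>s. the (f s)) ` D) (the (f (lub le D))))"

definition complete_wsts :: "('a \<Rightarrow> 'a option) set \<Rightarrow> ('a \<Rightarrow> 'a \<Rightarrow> bool) \<Rightarrow> bool" where
  "complete_wsts F le \<longleftrightarrow> finite F \<and> wpo le \<and> dcpo le \<and> continuous_dcpo le
     \<and> (\<forall>f\<in>F. partial_continuous le f)"

definition step :: "('a \<Rightarrow> 'a option) set \<Rightarrow> 'a \<Rightarrow> 'a \<Rightarrow> bool" where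
  "step F s t \<longleftrightarrow> (\<exists>f\<in>F. f s = Some t)"

definition down :: "('a \<Rightarrow> 'a \<Rightarrow> bool) \<Rightarrow> 'a set \<Rightarrow> 'a set" where
  "down le A = {x. \<exists>a\<in>A. le x a}"

definition post_star :: "('a \<Rightarrow> 'a option) set \<Rightarrow> 'a set \<Rightarrow> 'a set" where
  "post_star F A = {t. \<exists>s\<in>A. (step F)\<^sup>*\<^sup>* s t}"

definition cover :: "('a \<Rightarrow> 'a option) set \<Rightarrow> ('a \<Rightarrow> 'a \<Rightarrow> bool) \<Rightarrow> 'a \<Rightarrow> 'a set" where
  "cover F le s0 = down le (post_star F (down le {s0}))"

definition Lub_set :: "('a \<Rightarrow> 'a \<Rightarrow> bool) \<Rightarrow> 'a set \<Rightarrow> 'a set" where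
  "Lub_set le E = {lub le D | D. D \<subseteq> E \<and> directed le D}"

definition Max_el :: "('a \<Rightarrow> 'a \<Rightarrow> bool) \<Rightarrow> 'a set \<Rightarrow> 'a set" where
  "Max_el le A = {x \<in> A. \<forall>y\<in>A. le x y \<longrightarrow> y = x}"

definition clover :: "('a \<Rightarrow> 'a option) set \<Rightarrow> ('a \<Rightarrow> 'a \<Rightarrow> bool) \<Rightarrow> 'a \<Rightarrow> 'a set" where
  "clover F le s0 = Max_el le (Lub_set le (cover F le s0))"

end

theory Submission
  imports Defs
begin

text \<open>Only one property of the transition system matters: the cover is downward closed.
For a downward closed set \<open>C\<close> of a continuous dcpo, \<open>Lub C\<close> is again closed under
directed lubs, because the lub of a directed family of lubs is the lub of the union of the
way-below sets of its members, and that union is a directed subset of \<open>C\<close>. Zorn's lemma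
therefore puts every element of \<open>Lub C\<close> below a maximal one. The maximal elements form an
antichain, hence a finite set \<open>M\<close>, and the down-closure of a finite set is Scott-closed.
So \<open>C \<subseteq> Lub C \<subseteq> \<down>M\<close> gives \<open>cl C \<subseteq> \<down>M\<close>, while every Scott-closed superset of \<open>C\<close>
contains the directed lubs from \<open>C\<close>, in particular \<open>M\<close>, and hence \<open>\<down>M\<close>.\<close>

lemma partial_order_on_typeD:
  assumes "partial_order_on_type le"
  shows "le x x" and "le x y \<Longrightarrow> le y z \<Longrightarrow> le x z" and "le x y \<Longrightarrow> le y x \<Longrightarrow> x = y"
  using assms unfolding partial_order_on_type_def by blast+

lemma lub_eqI:
  assumes po: "partial_order_on_type le" and x: "is_lub le D x"
  shows "lub le D = x"
  unfolding lub_def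
proof (rule the_equality)
  fix y assume "is_lub le D y"
  then have "le x y" "le y x"
    using x unfolding is_lub_def by blast+
  then show "y = x"
    by (rule partial_order_on_typeD(3)[OF po, rotated])
qed (fact x)

lemma is_lub_lub:
  assumes po: "partial_order_on_type le" and "dcpo le" and "directed le D"
  shows "is_lub le D (lub le D)"
proof -
  obtain x where "is_lub le D x"
    using assms(2,3) unfolding dcpo_def by blast
  then show ?thesis
    using lub_eqI[OF po] by simp
qed

lemma directed_finite_upper_bound:
  assumes po: "partial_order_on_type le" and D: "directed le D"
    and "finite A" and "A \<subseteq> D"
  shows "\<exists>e\<in>D. \<forall>a\<in>A. le a e"
  using \<open>finite A\<close> \<open>A \<subseteq> D\<close>
proof (induction A rule: finite_induct)
  case empty
  then show ?case
    using D unfolding directed_def by blast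
next
  case (insert x A)
  then obtain e where e: "e \<in> D" "\<forall>a\<in>A. le a e"
    by blast
  moreover obtain z where "z \<in> D" "le x z" "le e z"
    using D e(1) insert.prems unfolding directed_def by blast
  ultimately show ?case
    using partial_order_on_typeD(2)[OF po] by blast
qed

lemma directed_subset_down_finite:
  assumes po: "partial_order_on_type le" and D: "directed le D"
    and "finite M" and "D \<subseteq> down le M"
  shows "\<exists>m\<in>M. \<forall>d\<in>D. le d m"
proof (rule ccontr)
  assume "\<not> (\<exists>m\<in>M. \<forall>d\<in>D. le d m)"
  then obtain g where g: "\<And>m. m \<in> M \<Longrightarrow> g m \<in> D \<and> \<not> le (g m) m"
    by metis
  then obtain e where e: "e \<in> D" "\<forall>m\<in>M. le (g m) e"
    using directed_finite_upper_bound[OF po D, of "g ` M"] \<open>finite M\<close> by blast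
  then obtain m where "m \<in> M" "le e m"
    using \<open>D \<subseteq> down le M\<close> unfolding down_def by blast
  then show False
    using g e partial_order_on_typeD(2)[OF po] by blast
qed

lemma way_below_mono:
  assumes po: "partial_order_on_type le" and "way_below le y x" and "le x x'"
  shows "way_below le y x'"
  using assms(2,3) partial_order_on_typeD(2)[OF po] unfolding way_below_def by blast

lemma subset_Lub_set:
  assumes po: "partial_order_on_type le"
  shows "C \<subseteq> Lub_set le C"
proof
  fix c assume "c \<in> C"
  have "directed le {c}"
    using partial_order_on_typeD(1)[OF po] unfolding directed_def by blast
  moreover have "lub le {c} = c"
    by (rule lub_eqI[OF po]) (simp add: is_lub_def partial_order_on_typeD(1)[OF po])
  moreover have "{c} \<subseteq> C"
    using \<open>c \<in> C\<close> by simp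
  ultimately show "c \<in> Lub_set le C"
    unfolding Lub_set_def by force
qed

lemma Lub_set_directed_lub:
  assumes po: "partial_order_on_type le" and dc: "dcpo le" and cd: "continuous_dcpo le"
    and C: "down le C \<subseteq> C" and K: "directed le K" "K \<subseteq> Lub_set le C"
  shows "lub le K \<in> Lub_set le C"
proof -
  define D where "D = {y. \<exists>k\<in>K. way_below le y k}"
  have wb_dir: "\<And>k. directed le {y. way_below le y k}"
    and wb_lub: "\<And>k. lub le {y. way_below le y k} = k"
    using cd unfolding continuous_dcpo_def by auto
  have below: "le y k" if "way_below le y k" for y k
    using that is_lub_lub[OF po dc wb_dir[of k]] unfolding wb_lub is_lub_def by blast
  have "D \<subseteq> C"
  proof
    fix y assume "y \<in> D"
    then obtain k where k: "k \<in> K" "way_below le y k"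
      unfolding D_def by blast
    then obtain E where E: "k = lub le E" "E \<subseteq> C" "directed le E"
      using K(2) unfolding Lub_set_def by blast
    then obtain e where "e \<in> E" "le y e"
      using k(2) partial_order_on_typeD(1)[OF po] unfolding way_below_def by blast
    then show "y \<in> C"
      using C E(2) unfolding down_def by blast
  qed
  have "directed le D"
    unfolding directed_def
  proof (intro conjI ballI)
    obtain k y where "k \<in> K" "way_below le y k"
      using K(1) wb_dir unfolding directed_def by blast
    then show "D \<noteq> {}"
      unfolding D_def by blast
  next
    fix y1 y2 assume "y1 \<in> D" "y2 \<in> D"
    then obtain k1 k2 where "k1 \<in> K" "way_below le y1 k1" "k2 \<in> K" "way_below le y2 k2"
      unfolding D_def by blast
    moreover obtain k where "k \<in> K" "le k1 k" "le k2 k"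
      using K(1) \<open>k1 \<in> K\<close> \<open>k2 \<in> K\<close> unfolding directed_def by blast
    ultimately have "k \<in> K" "way_below le y1 k" "way_below le y2 k"
      using way_below_mono[OF po] by blast+
    then show "\<exists>z\<in>D. le y1 z \<and> le y2 z"
      using wb_dir[of k] unfolding directed_def D_def by blast
  qed
  have "is_lub le K (lub le D)"
    unfolding is_lub_def
  proof (intro conjI allI impI ballI)
    fix k assume "k \<in> K"
    then have "\<forall>d\<in>{y. way_below le y k}. le d (lub le D)"
      using is_lub_lub[OF po dc \<open>directed le D\<close>] unfolding is_lub_def D_def by blast
    then show "le k (lub le D)"
      using is_lub_lub[OF po dc wb_dir[of k]] unfolding wb_lub is_lub_def by blast
  next
    fix u assume "\<forall>k\<in>K. le k u"
    then have "\<forall>d\<in>D. le d u"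
      using below partial_order_on_typeD(2)[OF po] unfolding D_def by blast
    then show "le (lub le D) u"
      using is_lub_lub[OF po dc \<open>directed le D\<close>] unfolding is_lub_def by blast
  qed
  then have "lub le K = lub le D"
    by (rule lub_eqI[OF po])
  then show ?thesis
    unfolding Lub_set_def using \<open>D \<subseteq> C\<close> \<open>directed le D\<close> by blast
qed

lemma Lub_set_below_Max_el:
  assumes po: "partial_order_on_type le" and dc: "dcpo le" and cd: "continuous_dcpo le"
    and C: "down le C \<subseteq> C" and x: "x \<in> Lub_set le C"
  shows "\<exists>m\<in>Max_el le (Lub_set le C). le x m"
proof -
  define A where "A = {z \<in> Lub_set le C. le x z}"
  have "x \<in> A"
    using x partial_order_on_typeD(1)[OF po] unfolding A_def by blast
  have "\<exists>m\<in>A. \<forall>a\<in>A. le m a \<longrightarrow> a = m"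
  proof (rule predicate_Zorn)
    show "partial_order_on A (relation_of le A)"
      using po unfolding partial_order_on_type_def partial_order_on_def preorder_on_def
        refl_on_def trans_on_def antisym_on_def relation_of_def by auto
  next
    fix K assume K: "K \<in> Chains (relation_of le A)"
    then have "K \<subseteq> A"
      unfolding Chains_def relation_of_def by blast
    show "\<exists>u\<in>A. \<forall>k\<in>K. le k u"
    proof (cases "K = {}")
      case True
      then show ?thesis
        using \<open>x \<in> A\<close> by blast
    next
      case False
      have "directed le K"
        using False K unfolding directed_def Chains_def relation_of_def by blast
      then have "lub le K \<in> Lub_set le C" and ub: "\<forall>k\<in>K. le k (lub le K)"
        using Lub_set_directed_lub[OF po dc cd C] \<open>K \<subseteq> A\<close> is_lub_lub[OF po dc]
        unfolding A_def is_lub_def by blast+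
      moreover have "le x (lub le K)"
        using False ub \<open>K \<subseteq> A\<close> partial_order_on_typeD(2)[OF po] unfolding A_def by blast
      ultimately show ?thesis
        unfolding A_def by blast
    qed
  qed
  then obtain m where m: "m \<in> A" "\<And>a. a \<in> A \<Longrightarrow> le m a \<Longrightarrow> a = m"
    by blast
  have "m \<in> Max_el le (Lub_set le C)"
    using m partial_order_on_typeD(2)[OF po] unfolding Max_el_def A_def by blast
  then show ?thesis
    using m(1) unfolding A_def by blast
qed

lemma finite_Max_el:
  assumes "wpo le"
  shows "finite (Max_el le A)"
proof -
  have "antichain le (Max_el le A)"
    unfolding antichain_def Max_el_def by blast
  then show ?thesis
    using assms unfolding wpo_def by blast
qed

lemma scott_closed_down_finite:
  assumes po: "partial_order_on_type le" and dc: "dcpo le" and "finite M"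
  shows "scott_closed le (down le M)"
  unfolding scott_closed_def scott_open_def
proof (intro conjI allI impI)
  fix x y assume "x \<in> - down le M" "le x y"
  then show "y \<in> - down le M"
    using partial_order_on_typeD(2)[OF po] unfolding down_def by blast
next
  fix D assume D: "directed le D" and "lub le D \<in> - down le M"
  show "D \<inter> - down le M \<noteq> {}"
  proof
    assume "D \<inter> - down le M = {}"
    then obtain m where "m \<in> M" "\<forall>d\<in>D. le d m"
      using directed_subset_down_finite[OF po D \<open>finite M\<close>] by blast
    then have "le (lub le D) m"
      using is_lub_lub[OF po dc D] unfolding is_lub_def by blast
    then show False
      using \<open>lub le D \<in> - down le M\<close> \<open>m \<in> M\<close> unfolding down_def by blast
  qed
qed

lemma scott_closed_downward:
  assumes "scott_closed le K" and "y \<in> K" and "le x y"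
  shows "x \<in> K"
  using assms unfolding scott_closed_def scott_open_def by blast

lemma Lub_set_subset_scott_closed:
  assumes "scott_closed le K" and "C \<subseteq> K"
  shows "Lub_set le C \<subseteq> K"
  using assms unfolding scott_closed_def scott_open_def Lub_set_def by blast

lemma scott_cl_Max_el_Lub_set:
  assumes "wpo le" and dc: "dcpo le" and cd: "continuous_dcpo le" and C: "down le C \<subseteq> C"
  shows "scott_cl le C = down le (Max_el le (Lub_set le C))"
proof
  let ?M = "Max_el le (Lub_set le C)"
  have po: "partial_order_on_type le"
    using \<open>wpo le\<close> unfolding wpo_def by blast
  have "C \<subseteq> down le ?M"
  proof
    fix c assume "c \<in> C"
    then obtain m where "m \<in> ?M" "le c m"
      using subset_Lub_set[OF po] Lub_set_below_Max_el[OF po dc cd C] by blast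
    then show "c \<in> down le ?M"
      unfolding down_def by blast
  qed
  moreover have "scott_closed le (down le ?M)"
    using scott_closed_down_finite[OF po dc finite_Max_el[OF \<open>wpo le\<close>]] .
  ultimately show "scott_cl le C \<subseteq> down le ?M"
    unfolding scott_cl_def by (intro Inter_lower) simp
  show "down le ?M \<subseteq> scott_cl le C"
    unfolding scott_cl_def
  proof (intro subsetI InterI)
    fix x K assume "x \<in> down le ?M" and "K \<in> {K. scott_closed le K \<and> C \<subseteq> K}"
    then have K: "scott_closed le K" "C \<subseteq> K"
      by simp_all
    obtain m where "m \<in> ?M" "le x m"
      using \<open>x \<in> down le ?M\<close> unfolding down_def by blast
    then have "m \<in> K"
      using Lub_set_subset_scott_closed[OF K] unfolding Max_el_def by blast
    then show "x \<in> K"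
      using scott_closed_downward[OF K(1)] \<open>le x m\<close> by blast
  qed
qed

lemma down_down_subset:
  assumes "partial_order_on_type le"
  shows "down le (down le A) \<subseteq> down le A"
proof
  fix x assume "x \<in> down le (down le A)"
  then obtain y a where "a \<in> A" "le y a" "le x y"
    unfolding down_def by blast
  then show "x \<in> down le A"
    using partial_order_on_typeD(2)[OF assms] unfolding down_def by blast
qed

theorem proposition3p7:
  fixes F :: "('a \<Rightarrow> 'a option) set" and le :: "'a \<Rightarrow> 'a \<Rightarrow> bool" and s0 :: 'a
  assumes "complete_wsts F le"
  shows "finite (clover F le s0) \<and> scott_cl le (cover F le s0) = down le (clover F le s0)"
proof
  have wpo: "wpo le" and dc: "dcpo le" and cd: "continuous_dcpo le"
    using assms unfolding complete_wsts_def by auto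
  show "finite (clover F le s0)"
    unfolding clover_def by (rule finite_Max_el[OF wpo])
  have "down le (cover F le s0) \<subseteq> cover F le s0"
    using wpo unfolding cover_def wpo_def by (intro down_down_subset) simp
  from scott_cl_Max_el_Lub_set[OF wpo dc cd this]
  show "scott_cl le (cover F le s0) = down le (clover F le s0)"
    unfolding clover_def .
qed

end
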